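(* Suppose that the Colour alignment problem always has a solution (for all positive integers $m,n$ and every initial distribution of balls). Then every finite $0$-rectangular band that has a permutation matching has an involution matching.
   Context: Colour alignment problem: there are $m$ girls and $mn$ (distinct) balls, each girl holding $n$ balls, and there are exactly $m$ balls of each of $n$ colours. An exchange consists of two girls swapping one ball each (one ball for one ball, so each girl still holds $n$ balls); no ball may participate in more than one exchange. A solution is a set of such exchanges after which each girl holds balls of all $n$ colours (hence exactly one ball of each colour). A finite $0$-rectangular band with $m$ rows and $n$ columns: $S=(R\times C)\cup\{0\}$ with $R=\{1,\dots,m\}$, $C=\{1,\dots,n\}$, and a set $E\subseteq R\times C$ meeting every row and every column; multiplication is $(i,j)(k,l)=(i,l)$ if $(k,j)\in E$ and $0$ otherwise, with $0$ a zero element. For $x\in S$, $V(x)=\{y\in S: xyx=x,\ yxy=y\}$. A permutation matching of $S$ is a bijection $\phi:S\to S$ with $\phi(x)\in V(x)$ for all $x$; an involution matching is a permutation matching $\phi$ with $\phi\circ\phi=\mathrm{id}_S$. *)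

theory Defs
  imports Main
begin

text \<open>Balls are the numbers 0,...,m*n-1. hold b is the girl (in 0..m-1) holding ball b,
  col b is its colour (in 0..n-1).\<close>

definition valid_distribution :: "nat \<Rightarrow> nat \<Rightarrow> (nat \<Rightarrow> nat) \<Rightarrow> (nat \<Rightarrow> nat) \<Rightarrow> bool" where
  "valid_distribution m n hold col \<longleftrightarrow>
     (\<forall>b < m * n. hold b < m \<and> col b < n) \<and>
     (\<forall>g < m. card {b. b < m * n \<and> hold b = g} = n) \<and>
     (\<forall>c < n. card {b. b < m * n \<and> col b = c} = m)"

definition admissible_exchanges :: "nat \<Rightarrow> nat \<Rightarrow> (nat \<Rightarrow> nat) \<Rightarrow> nat set set \<Rightarrow> bool" where
  "admissible_exchanges m n hold X \<longleftrightarrow>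
     (\<forall>e \<in> X. \<exists>a b. e = {a, b} \<and> a < m * n \<and> b < m * n \<and> hold a \<noteq> hold b) \<and>
     (\<forall>e \<in> X. \<forall>e' \<in> X. e \<noteq> e' \<longrightarrow> e \<inter> e' = {})"

definition new_holder :: "(nat \<Rightarrow> nat) \<Rightarrow> nat set set \<Rightarrow> nat \<Rightarrow> nat" where
  "new_holder hold X b =
     (if \<exists>e \<in> X. b \<in> e then hold (THE b'. {b, b'} \<in> X) else hold b)"

definition colour_alignment_solvable :: "nat \<Rightarrow> nat \<Rightarrow> (nat \<Rightarrow> nat) \<Rightarrow> (nat \<Rightarrow> nat) \<Rightarrow> bool" where
  "colour_alignment_solvable m n hold col \<longleftrightarrow>
     (\<exists>X. admissible_exchanges m n hold X \<and>
          (\<forall>g < m. \<forall>c < n. \<exists>b < m * n. new_holder hold X b = g \<and> col b = c))"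

definition colour_alignment_always_solvable :: bool where
  "colour_alignment_always_solvable \<longleftrightarrow>
     (\<forall>m n hold col. 0 < m \<longrightarrow> 0 < n \<longrightarrow> valid_distribution m n hold col \<longrightarrow>
        colour_alignment_solvable m n hold col)"

text \<open>Elements: None is the zero, Some (i,j) the element (i,j) of R x C.\<close>

definition rb_carrier :: "nat \<Rightarrow> nat \<Rightarrow> (nat \<times> nat) option set" where
  "rb_carrier m n = insert None (Some ` ({1..m} \<times> {1..n}))"

definition rb_valid :: "nat \<Rightarrow> nat \<Rightarrow> (nat \<times> nat) set \<Rightarrow> bool" where
  "rb_valid m n E \<longleftrightarrow> E \<subseteq> {1..m} \<times> {1..n} \<and>
     (\<forall>i \<in> {1..m}. \<exists>j. (i, j) \<in> E) \<and> (\<forall>j \<in> {1..n}. \<exists>i. (i, j) \<in> E)"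

fun rb_mult :: "(nat \<times> nat) set \<Rightarrow> (nat \<times> nat) option \<Rightarrow> (nat \<times> nat) option \<Rightarrow> (nat \<times> nat) option" where
  "rb_mult E (Some (i, j)) (Some (k, l)) = (if (k, j) \<in> E then Some (i, l) else None)"
| "rb_mult E _ _ = None"

definition rb_inverses :: "nat \<Rightarrow> nat \<Rightarrow> (nat \<times> nat) set \<Rightarrow> (nat \<times> nat) option \<Rightarrow> (nat \<times> nat) option set" where
  "rb_inverses m n E x = {y \<in> rb_carrier m n.
      rb_mult E (rb_mult E x y) x = x \<and> rb_mult E (rb_mult E y x) y = y}"

definition permutation_matching :: "nat \<Rightarrow> nat \<Rightarrow> (nat \<times> nat) set \<Rightarrow> ((nat \<times> nat) option \<Rightarrow> (nat \<times> nat) option) \<Rightarrow> bool" where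
  "permutation_matching m n E \<phi> \<longleftrightarrow>
     bij_betw \<phi> (rb_carrier m n) (rb_carrier m n) \<and>
     (\<forall>x \<in> rb_carrier m n. \<phi> x \<in> rb_inverses m n E x)"

definition involution_matching :: "nat \<Rightarrow> nat \<Rightarrow> (nat \<times> nat) set \<Rightarrow> ((nat \<times> nat) option \<Rightarrow> (nat \<times> nat) option) \<Rightarrow> bool" where
  "involution_matching m n E \<phi> \<longleftrightarrow>
     permutation_matching m n E \<phi> \<and> (\<forall>x \<in> rb_carrier m n. \<phi> (\<phi> x) = x)"

end

theory Submission
  imports Defs
begin

(* Rows are girls and the nonzero elements (i, j) are balls: ball (i, j) is held by girl i and
   coloured by the column l of \<phi> (i, j), so that (i, l) \<in> E.  As \<phi> is a bijection, every colour
   occurs exactly m times.  A solution of the colour alignment problem pairs the balls by an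
   involution s such that \<pi> x = (row of s x, colour of x) is a bijection of the cells.  Then
   \<pi> x \<mapsto> \<pi> (s x) is an involution, and \<pi> (s x) = (row of x, colour of s x) is an inverse of \<pi> x
   because both (row of x, colour of x) and (row of s x, colour of s x) lie in E. *)

lemma card_Collect_bij_betw:
  assumes "bij_betw f A B"
  shows "card {a \<in> A. P (f a)} = card {b \<in> B. P b}"
  using bij_betw_same_card[OF bij_betw_Collect[OF assms]] by simp

lemma bij_betw_Suc_lessThan: "bij_betw Suc {..<k} {1..k}"
  by (simp add: bij_betw_def image_Suc_lessThan)

lemma bij_betw_map_prod_Suc:
  "bij_betw (map_prod Suc Suc) ({..<m} \<times> {..<n}) ({1..m} \<times> {1..n})"
  by (intro bij_betw_map_prod bij_betw_Suc_lessThan)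

lemma bij_betw_div_mod:
  assumes "0 < (n::nat)"
  shows "bij_betw (\<lambda>b. (b div n, b mod n)) {..<m * n} ({..<m} \<times> {..<n})"
proof (rule bij_betw_byWitness[where f' = "\<lambda>(g, c). g * n + c"])
  have "g * n + c < m * n" if "g < m" "c < n" for g c
  proof -
    have "g * n + c < Suc g * n" using that by simp
    also have "\<dots> \<le> m * n" using that by (intro mult_le_mono1) simp
    finally show ?thesis .
  qed
  then show "(\<lambda>(g, c). g * n + c) ` ({..<m} \<times> {..<n}) \<subseteq> {..<m * n}"
    by auto
qed (use assms in \<open>auto simp: less_mult_imp_div_less\<close>)

definition cell_of_ball :: "nat \<Rightarrow> nat \<Rightarrow> nat \<times> nat" where
  "cell_of_ball n b = (Suc (b div n), Suc (b mod n))"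

lemma bij_betw_cell_of_ball:
  assumes "0 < n"
  shows "bij_betw (cell_of_ball n) {..<m * n} ({1..m} \<times> {1..n})"
proof -
  have "cell_of_ball n = map_prod Suc Suc \<circ> (\<lambda>b. (b div n, b mod n))"
    by (simp add: fun_eq_iff cell_of_ball_def)
  then show ?thesis
    using bij_betw_trans[OF bij_betw_div_mod[OF assms] bij_betw_map_prod_Suc] by simp
qed

definition exchange_partner :: "nat set set \<Rightarrow> nat \<Rightarrow> nat" where
  "exchange_partner X b = (if \<exists>e\<in>X. b \<in> e then THE b'. {b, b'} \<in> X else b)"

lemma new_holder_exchange_partner: "new_holder hold X b = hold (exchange_partner X b)"
  by (simp add: new_holder_def exchange_partner_def)

lemma exchange_partner_eqI:
  assumes "pairwise disjnt X" and "{a, c} \<in> X"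
  shows "exchange_partner X a = c"
proof -
  have "(THE b'. {a, b'} \<in> X) = c"
  proof (rule the_equality)
    fix b' assume "{a, b'} \<in> X"
    moreover have "\<not> disjnt {a, b'} {a, c}" by (simp add: disjnt_def)
    ultimately have "{a, b'} = {a, c}"
      using assms by (meson pairwiseD)
    then show "b' = c" by (auto simp: doubleton_eq_iff)
  qed (fact assms(2))
  with assms(2) show ?thesis by (auto simp: exchange_partner_def)
qed

lemma admissible_exchanges_partner:
  assumes "admissible_exchanges m n hold X" and "b < m * n"
  shows "exchange_partner X b < m * n \<and> exchange_partner X (exchange_partner X b) = b"
proof (cases "\<exists>e\<in>X. b \<in> e")
  case True
  have disj: "pairwise disjnt X"
    using assms(1) by (simp add: admissible_exchanges_def pairwise_def disjnt_def)
  from True obtain e where "e \<in> X" "b \<in> e" by blast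
  with assms(1) obtain a c where "{a, c} \<in> X" "b \<in> {a, c}" "a < m * n" "c < m * n"
    unfolding admissible_exchanges_def by auto
  then obtain c where "{b, c} \<in> X" "c < m * n"
    by (auto simp: insert_commute)
  moreover from this have "{c, b} \<in> X" by (simp add: insert_commute)
  ultimately show ?thesis using exchange_partner_eqI[OF disj] by simp
next
  case False
  with assms(2) show ?thesis by (simp add: exchange_partner_def)
qed

lemma colour_alignment_solvable_partner_bij:
  assumes valid: "valid_distribution m n hold col"
    and solvable: "colour_alignment_solvable m n hold col"
  shows "\<exists>s. (\<forall>b < m * n. s b < m * n \<and> s (s b) = b) \<and>
           bij_betw (\<lambda>b. (hold (s b), col b)) {..<m * n} ({..<m} \<times> {..<n})"
proof -
  from solvable obtain X where adm: "admissible_exchanges m n hold X"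
    and aligned: "\<forall>g < m. \<forall>c < n. \<exists>b < m * n. new_holder hold X b = g \<and> col b = c"
    by (auto simp: colour_alignment_solvable_def)
  define s where "s = exchange_partner X"
  define f where "f b = (hold (s b), col b)" for b
  have s: "\<forall>b < m * n. s b < m * n \<and> s (s b) = b"
    using admissible_exchanges_partner[OF adm] by (simp add: s_def)
  have "f ` {..<m * n} \<subseteq> {..<m} \<times> {..<n}"
    using valid s by (auto simp: f_def valid_distribution_def)
  moreover have "{..<m} \<times> {..<n} \<subseteq> f ` {..<m * n}"
  proof
    fix y assume "y \<in> {..<m} \<times> {..<n}"
    with aligned obtain b where "b < m * n" "hold (s b) = fst y" "col b = snd y"
      by (force simp: s_def new_holder_exchange_partner)
    then show "y \<in> f ` {..<m * n}" by (auto simp: f_def image_iff intro!: bexI[of _ b])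
  qed
  ultimately have image: "f ` {..<m * n} = {..<m} \<times> {..<n}" by blast
  then have "inj_on f {..<m * n}"
    by (intro eq_card_imp_inj_on) (simp_all add: card_cartesian_product)
  with image s show ?thesis
    unfolding bij_betw_def f_def by blast
qed

lemma valid_distribution_cell_colouring:
  fixes \<kappa> :: "nat \<times> nat \<Rightarrow> nat"
  assumes n: "0 < n"
    and colour: "\<forall>x \<in> {1..m} \<times> {1..n}. \<kappa> x \<in> {1..n}"
    and colour_card: "\<forall>l \<in> {1..n}. card {x \<in> {1..m} \<times> {1..n}. \<kappa> x = l} = m"
  shows "valid_distribution m n (\<lambda>b. b div n) (\<lambda>b. \<kappa> (cell_of_ball n b) - 1)"
proof -
  let ?C = "{1..m} \<times> {1..n}" and ?B = "{..<m * n}"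
  have cell: "bij_betw (cell_of_ball n) ?B ?C"
    using bij_betw_cell_of_ball[OF n] .
  have colour_cell: "\<kappa> (cell_of_ball n b) \<in> {1..n}" if "b < m * n" for b
    using that bspec[OF colour bij_betw_apply[OF cell]] by simp
  have girl_card: "card {b. b < m * n \<and> b div n = g} = n" if "g < m" for g
  proof -
    have "{b. b < m * n \<and> b div n = g} = {b \<in> ?B. fst (cell_of_ball n b) = Suc g}"
      by (auto simp: cell_of_ball_def)
    also have "card \<dots> = card {x \<in> ?C. fst x = Suc g}"
      by (rule card_Collect_bij_betw[OF cell])
    also have "{x \<in> ?C. fst x = Suc g} = {Suc g} \<times> {1..n}"
      using that by auto
    finally show ?thesis
      by (simp add: card_cartesian_product)
  qed
  have ball_colour_card: "card {b. b < m * n \<and> \<kappa> (cell_of_ball n b) - 1 = c} = m" if "c < n" for c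
  proof -
    have "{b. b < m * n \<and> \<kappa> (cell_of_ball n b) - 1 = c} =
          {b \<in> ?B. \<kappa> (cell_of_ball n b) = Suc c}"
      using colour_cell by force
    also have "card \<dots> = card {x \<in> ?C. \<kappa> x = Suc c}"
      by (rule card_Collect_bij_betw[OF cell])
    finally show ?thesis
      using colour_card that by simp
  qed
  have "b div n < m \<and> \<kappa> (cell_of_ball n b) - 1 < n" if "b < m * n" for b
    using that colour_cell[OF that] by (auto simp: less_mult_imp_div_less)
  with girl_card ball_colour_card show ?thesis
    by (simp add: valid_distribution_def)
qed

lemma colour_alignment_on_cells:
  fixes \<kappa> :: "nat \<times> nat \<Rightarrow> nat"
  assumes solvable: colour_alignment_always_solvable and m: "0 < m" and n: "0 < n"
    and colour: "\<forall>x \<in> {1..m} \<times> {1..n}. \<kappa> x \<in> {1..n}"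
    and colour_card: "\<forall>l \<in> {1..n}. card {x \<in> {1..m} \<times> {1..n}. \<kappa> x = l} = m"
  shows "\<exists>s. (\<forall>x \<in> {1..m} \<times> {1..n}. s x \<in> {1..m} \<times> {1..n} \<and> s (s x) = x) \<and>
           bij_betw (\<lambda>x. (fst (s x), \<kappa> x)) ({1..m} \<times> {1..n}) ({1..m} \<times> {1..n})"
proof -
  let ?C = "{1..m} \<times> {1..n}" and ?B = "{..<m * n}"
  define cell where "cell = cell_of_ball n"
  define ball where "ball = inv_into ?B cell"
  define col where "col = (\<lambda>b. \<kappa> (cell b) - 1)"
  have cell: "bij_betw cell ?B ?C"
    unfolding cell_def using bij_betw_cell_of_ball[OF n] .
  have ball: "bij_betw ball ?C ?B"
    unfolding ball_def by (rule bij_betw_inv_into[OF cell])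
  have cell_ball: "cell (ball x) = x" if "x \<in> ?C" for x
    using that cell by (simp add: ball_def bij_betw_inv_into_right)
  have ball_cell: "ball (cell b) = b" if "b \<in> ?B" for b
    using that cell by (simp add: ball_def bij_betw_inv_into_left)
  have valid: "valid_distribution m n (\<lambda>b. b div n) col"
    using valid_distribution_cell_colouring[OF n colour colour_card] by (simp add: col_def cell_def)
  then have "colour_alignment_solvable m n (\<lambda>b. b div n) col"
    using solvable m n by (simp add: colour_alignment_always_solvable_def)
  then obtain s\<^sub>0 where s\<^sub>0: "\<forall>b < m * n. s\<^sub>0 b < m * n \<and> s\<^sub>0 (s\<^sub>0 b) = b"
    and bij_s\<^sub>0: "bij_betw (\<lambda>b. (s\<^sub>0 b div n, col b)) ?B ({..<m} \<times> {..<n})"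
    using colour_alignment_solvable_partner_bij[OF valid] by blast
  define s where "s x = cell (s\<^sub>0 (ball x))" for x
  have partner: "\<forall>x \<in> ?C. s x \<in> ?C \<and> s (s x) = x"
  proof
    fix x assume x: "x \<in> ?C"
    have "ball x < m * n"
      using bij_betw_apply[OF ball x] by simp
    with s\<^sub>0 have "s\<^sub>0 (ball x) \<in> ?B" and "s\<^sub>0 (s\<^sub>0 (ball x)) = ball x"
      by simp_all
    then show "s x \<in> ?C \<and> s (s x) = x"
      using bij_betw_apply[OF cell] by (simp add: s_def ball_cell cell_ball[OF x])
  qed
  define \<rho> where "\<rho> = map_prod Suc Suc \<circ> ((\<lambda>b. (s\<^sub>0 b div n, col b)) \<circ> ball)"
  have bij_\<rho>: "bij_betw \<rho> ?C ?C"
    unfolding \<rho>_def using bij_betw_trans[OF bij_betw_trans[OF ball bij_s\<^sub>0] bij_betw_map_prod_Suc] .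
  have "\<rho> x = (fst (s x), \<kappa> x)" if "x \<in> ?C" for x
  proof -
    have "\<kappa> x \<in> {1..n}" using colour that by blast
    then show ?thesis
      using cell_ball[OF that] by (simp add: \<rho>_def s_def cell_def cell_of_ball_def col_def)
  qed
  then have "bij_betw \<rho> ?C ?C = bij_betw (\<lambda>x. (fst (s x), \<kappa> x)) ?C ?C"
    by (rule bij_betw_cong)
  with bij_\<rho> have "bij_betw (\<lambda>x. (fst (s x), \<kappa> x)) ?C ?C"
    by simp
  with partner show ?thesis
    by (intro exI[of _ s] conjI)
qed

lemma rb_inverses_Some:
  "y \<in> rb_inverses m n E (Some (i, j)) \<longleftrightarrow>
   (\<exists>k l. y = Some (k, l) \<and> k \<in> {1..m} \<and> l \<in> {1..n} \<and> (k, j) \<in> E \<and> (i, l) \<in> E)"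
  unfolding rb_inverses_def rb_carrier_def
  by (cases y) (auto split: if_splits)

lemma rb_inverses_None: "rb_inverses m n E None = {None}"
proof -
  have "rb_mult E (rb_mult E y None) y = None" for y
    by (cases y) auto
  then show ?thesis unfolding rb_inverses_def rb_carrier_def by auto
qed

lemma permutation_matching_None:
  assumes "permutation_matching m n E \<phi>"
  shows "\<phi> None = None"
  using assms rb_inverses_None by (auto simp: permutation_matching_def rb_carrier_def)

lemma permutation_matching_in_E:
  assumes "permutation_matching m n E \<phi>" and "x \<in> {1..m} \<times> {1..n}"
  shows "(fst x, snd (the (\<phi> (Some x)))) \<in> E"
proof -
  obtain i j where x: "x = (i, j)" by (cases x)
  have "Some x \<in> rb_carrier m n" using assms(2) by (simp add: rb_carrier_def)
  with assms(1) have "\<phi> (Some (i, j)) \<in> rb_inverses m n E (Some (i, j))"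
    by (simp add: permutation_matching_def x)
  then show ?thesis by (auto simp: rb_inverses_Some x)
qed

lemma permutation_matching_bij_betw_cells:
  assumes "permutation_matching m n E \<phi>"
  shows "bij_betw (\<lambda>x. the (\<phi> (Some x))) ({1..m} \<times> {1..n}) ({1..m} \<times> {1..n})"
proof -
  let ?C = "{1..m} \<times> {1..n}"
  have "bij_betw \<phi> (rb_carrier m n) (rb_carrier m n)"
    using assms by (simp add: permutation_matching_def)
  moreover have "bij_betw \<phi> {None} {None}"
    using permutation_matching_None[OF assms] by simp
  ultimately have "bij_betw \<phi> (Some ` ?C) (Some ` ?C)"
    using bij_betw_DiffI[of \<phi> "rb_carrier m n" "rb_carrier m n" "{None}" "{None}"]
    by (simp add: rb_carrier_def image_set_diff[symmetric])
  moreover have "bij_betw Some ?C (Some ` ?C)"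
    by (simp add: bij_betw_def)
  moreover have "bij_betw the (Some ` ?C) ?C"
    by (simp add: bij_betw_def inj_on_def image_image)
  ultimately have "bij_betw (the \<circ> \<phi> \<circ> Some) ?C ?C"
    by (meson bij_betw_trans)
  then show ?thesis by (simp add: comp_def)
qed

lemma permutation_matching_column_card:
  assumes "permutation_matching m n E \<phi>" and "l \<in> {1..n}"
  shows "card {x \<in> {1..m} \<times> {1..n}. snd (the (\<phi> (Some x))) = l} = m"
proof -
  have "card {x \<in> {1..m} \<times> {1..n}. snd (the (\<phi> (Some x))) = l} =
        card {y \<in> {1..m} \<times> {1..n}. snd y = l}"
    by (rule card_Collect_bij_betw[OF permutation_matching_bij_betw_cells[OF assms(1)]])
  also have "{y \<in> {1..m} \<times> {1..n}. snd y = l} = {1..m} \<times> {l}"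
    using assms(2) by auto
  finally show ?thesis by (simp add: card_cartesian_product)
qed

lemma involution_matching_map_option:
  assumes "\<forall>y \<in> {1..m} \<times> {1..n}. \<psi> y \<in> {1..m} \<times> {1..n} \<and> \<psi> (\<psi> y) = y \<and>
             (fst (\<psi> y), snd y) \<in> E \<and> (fst y, snd (\<psi> y)) \<in> E"
  shows "involution_matching m n E (map_option \<psi>)"
proof -
  have carrier: "map_option \<psi> y \<in> rb_carrier m n" and invol: "map_option \<psi> (map_option \<psi> y) = y"
    if "y \<in> rb_carrier m n" for y
    using that assms by (auto simp: rb_carrier_def)
  have "bij_betw (map_option \<psi>) (rb_carrier m n) (rb_carrier m n)"
    by (rule bij_betw_byWitness[where f' = "map_option \<psi>"]) (auto simp: carrier invol)
  moreover have "map_option \<psi> y \<in> rb_inverses m n E y" if "y \<in> rb_carrier m n" for y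
  proof (cases y)
    case (Some x)
    with that assms have "x \<in> {1..m} \<times> {1..n}" "\<psi> x \<in> {1..m} \<times> {1..n}"
      "(fst (\<psi> x), snd x) \<in> E" "(fst x, snd (\<psi> x)) \<in> E"
      by (auto simp: rb_carrier_def)
    with Some show ?thesis
      by (cases x, cases "\<psi> x") (auto simp: rb_inverses_Some)
  qed (simp add: rb_inverses_None)
  ultimately show ?thesis
    using invol by (simp add: involution_matching_def permutation_matching_def)
qed

lemma involution_matching_of_partner_bij:
  assumes partner: "\<forall>x \<in> {1..m} \<times> {1..n}. s x \<in> {1..m} \<times> {1..n} \<and> s (s x) = x"
    and in_E: "\<forall>x \<in> {1..m} \<times> {1..n}. (fst x, \<kappa> x) \<in> E"
    and bij: "bij_betw (\<lambda>x. (fst (s x), \<kappa> x)) ({1..m} \<times> {1..n}) ({1..m} \<times> {1..n})"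
  shows "\<exists>\<psi>. involution_matching m n E \<psi>"
proof -
  let ?C = "{1..m} \<times> {1..n}"
  define \<pi> where "\<pi> = (\<lambda>x. (fst (s x), \<kappa> x))"
  define \<psi> where "\<psi> y = \<pi> (s (inv_into ?C \<pi> y))" for y
  from bij have bij_\<pi>: "bij_betw \<pi> ?C ?C"
    unfolding \<pi>_def .
  have \<psi>_\<pi>: "\<psi> (\<pi> x) = \<pi> (s x)" if "x \<in> ?C" for x
    using that bij_\<pi> by (simp add: \<psi>_def bij_betw_inv_into_left)
  have "\<psi> y \<in> ?C \<and> \<psi> (\<psi> y) = y \<and> (fst (\<psi> y), snd y) \<in> E \<and> (fst y, snd (\<psi> y)) \<in> E"
    if "y \<in> ?C" for y
  proof -
    from that have "y \<in> \<pi> ` ?C"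
      using bij_betw_imp_surj_on[OF bij_\<pi>] by simp
    then obtain x where x: "x \<in> ?C" "y = \<pi> x" ..
    have sx: "s x \<in> ?C" "s (s x) = x"
      using partner x(1) by auto
    have \<psi>y: "\<psi> y = \<pi> (s x)"
      using x \<psi>_\<pi> by simp
    have "\<psi> y \<in> ?C"
      using \<psi>y bij_betw_apply[OF bij_\<pi> sx(1)] by simp
    moreover have "\<psi> (\<psi> y) = y"
      using \<psi>y \<psi>_\<pi>[OF sx(1)] sx(2) x(2) by simp
    moreover have "(fst (\<psi> y), snd y) \<in> E" and "(fst y, snd (\<psi> y)) \<in> E"
      using \<psi>y x(2) sx bspec[OF in_E x(1)] bspec[OF in_E sx(1)] by (simp_all add: \<pi>_def)
    ultimately show ?thesis by blast
  qed
  then show ?thesis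
    using involution_matching_map_option by blast
qed

theorem theorem2p4:
  assumes "colour_alignment_always_solvable"
  shows "\<forall>m n E. 0 < m \<longrightarrow> 0 < n \<longrightarrow> rb_valid m n E \<longrightarrow>
           (\<exists>\<phi>. permutation_matching m n E \<phi>) \<longrightarrow> (\<exists>\<psi>. involution_matching m n E \<psi>)"
proof (intro allI impI)
  fix m n :: nat and E
  assume m: "0 < m" and n: "0 < n" and "rb_valid m n E"
    and "\<exists>\<phi>. permutation_matching m n E \<phi>"
  then obtain \<phi> where \<phi>: "permutation_matching m n E \<phi>" by blast
  define \<kappa> where "\<kappa> x = snd (the (\<phi> (Some x)))" for x
  have colour: "\<forall>x \<in> {1..m} \<times> {1..n}. \<kappa> x \<in> {1..n}"
    using bij_betw_apply[OF permutation_matching_bij_betw_cells[OF \<phi>]] by (simp add: \<kappa>_def mem_Times_iff)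
  have in_E: "\<forall>x \<in> {1..m} \<times> {1..n}. (fst x, \<kappa> x) \<in> E"
    using permutation_matching_in_E[OF \<phi>] by (simp add: \<kappa>_def)
  have colour_card: "\<forall>l \<in> {1..n}. card {x \<in> {1..m} \<times> {1..n}. \<kappa> x = l} = m"
    using permutation_matching_column_card[OF \<phi>] by (simp add: \<kappa>_def)
  obtain s where partner: "\<forall>x \<in> {1..m} \<times> {1..n}. s x \<in> {1..m} \<times> {1..n} \<and> s (s x) = x"
    and bij: "bij_betw (\<lambda>x. (fst (s x), \<kappa> x)) ({1..m} \<times> {1..n}) ({1..m} \<times> {1..n})"
    using colour_alignment_on_cells[OF assms m n colour colour_card] by blast
  show "\<exists>\<psi>. involution_matching m n E \<psi>"
    by (rule involution_matching_of_partner_bij[OF partner in_E bij])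
qed

end
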